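(* For every weak composition $a$, $\mathfrak{L}_a=\sum_{T\in\mathfrak{L}\mathrm{SSF}(a)}x^{\mathrm{wt}(T)}$.
   Context: Weak composition of length $n$: sequence of $n$ nonnegative integers. A local move replaces consecutive entries $(0,k)$ at positions $p,p+1$ by $(i,j)$, $i+j=k$, $i,j\ge0$; a fixed slide of $a$ is obtained from $a$ by a (possibly empty) sequence of such moves with $j>0$ required whenever $a_{p+1}\ne0$; $\mathfrak{L}_a=\sum x^b$ over the set of fixed slides $b$ of $a$. $D(a)$: $a_i$ left-justified boxes in row $i$, row 1 lowest; for a filling $T$, $\mathrm{wt}(T)_i$ is the number of entries $i$. Triples (rows $r<s$): Type A: $\gamma=(r,c),\alpha=(r,c+1),\beta=(s,c+1)$, $a_r\ge a_s$; Type B: $\gamma=(s,c),\alpha=(s,c+1),\beta=(r,c)$, $a_s>a_r$; inversion triple: $\beta>\gamma\ge\alpha$ or $\gamma\ge\alpha>\beta$. A semi-skyline filling: positive integer entries, rows weakly decreasing left to right, distinct column entries, all triples inversion triples. $\mathfrak{L}\mathrm{SSF}(a)$: semi-skyline fillings of $D(a)$ whose first-column entry in each nonempty row $i$ equals $i$ and such that whenever box $B$ is in a higher row than box $B'$, the entry of $B$ is strictly larger than that of $B'$. *)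

theory Defs
  imports "HOL-Library.Poly_Mapping"
begin

text \<open>Weak compositions are lists of naturals; list position p (0-based) is entry a_(p+1).
  Monomials x^b are finitely supported exponent maps nat =>0 nat (variable x_i has index i, i >= 1);
  polynomials are elements of (nat =>0 nat) =>0 int.\<close>

definition mono :: "nat list \<Rightarrow> (nat \<Rightarrow>\<^sub>0 nat)" where
  "mono b = (\<Sum>p<length b. Poly_Mapping.single (Suc p) (b ! p))"

definition slide_step :: "nat list \<Rightarrow> nat list \<Rightarrow> nat list \<Rightarrow> bool" where
  "slide_step a b b' \<longleftrightarrow>
     (\<exists>p i j. Suc p < length b \<and> b ! p = 0 \<and> i + j = b ! Suc p \<and>
        (a ! Suc p \<noteq> 0 \<longrightarrow> j > 0) \<and>
        b' = b[p := i, Suc p := j])"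

definition fixed_slides :: "nat list \<Rightarrow> nat list set" where
  "fixed_slides a = {b. (slide_step a)\<^sup>*\<^sup>* a b}"

definition frakL :: "nat list \<Rightarrow> ((nat \<Rightarrow>\<^sub>0 nat) \<Rightarrow>\<^sub>0 int)" where
  "frakL a = (\<Sum>b\<in>fixed_slides a. Poly_Mapping.single (mono b) 1)"

text \<open>Diagram D(a): boxes (row, column), both 1-based, row 1 lowest.\<close>
definition diag :: "nat list \<Rightarrow> (nat \<times> nat) set" where
  "diag a = {(r, c). 1 \<le> r \<and> r \<le> length a \<and> 1 \<le> c \<and> c \<le> a ! (r - 1)}"

definition row_len :: "nat list \<Rightarrow> nat \<Rightarrow> nat" where
  "row_len a r = a ! (r - 1)"

definition inversion_triple :: "nat \<Rightarrow> nat \<Rightarrow> nat \<Rightarrow> bool" where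
  "inversion_triple g al be \<longleftrightarrow> (be > g \<and> g \<ge> al) \<or> (g \<ge> al \<and> al > be)"

definition semi_skyline :: "nat list \<Rightarrow> (nat \<times> nat \<Rightarrow> nat) \<Rightarrow> bool" where
  "semi_skyline a T \<longleftrightarrow>
     (\<forall>B\<in>diag a. T B > 0) \<and>
     (\<forall>r c. (r, c) \<in> diag a \<and> (r, Suc c) \<in> diag a \<longrightarrow> T (r, c) \<ge> T (r, Suc c)) \<and>
     (\<forall>r s c. (r, c) \<in> diag a \<and> (s, c) \<in> diag a \<and> r \<noteq> s \<longrightarrow> T (r, c) \<noteq> T (s, c)) \<and>
     (\<forall>r s c. r < s \<and> row_len a r \<ge> row_len a s \<and>
        (r, c) \<in> diag a \<and> (r, Suc c) \<in> diag a \<and> (s, Suc c) \<in> diag a \<longrightarrow>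
        inversion_triple (T (r, c)) (T (r, Suc c)) (T (s, Suc c))) \<and>
     (\<forall>r s c. r < s \<and> row_len a s > row_len a r \<and>
        (s, c) \<in> diag a \<and> (s, Suc c) \<in> diag a \<and> (r, c) \<in> diag a \<longrightarrow>
        inversion_triple (T (s, c)) (T (s, Suc c)) (T (r, c)))"

definition LSSF :: "nat list \<Rightarrow> (nat \<times> nat \<Rightarrow> nat) set" where
  "LSSF a = {T. (\<forall>B. B \<notin> diag a \<longrightarrow> T B = 0) \<and> semi_skyline a T \<and>
     (\<forall>r. (r, 1) \<in> diag a \<longrightarrow> T (r, 1) = r) \<and>
     (\<forall>r c s d. (r, c) \<in> diag a \<and> (s, d) \<in> diag a \<and> r > s \<longrightarrow> T (r, c) > T (s, d))}"

definition wt :: "nat list \<Rightarrow> (nat \<times> nat \<Rightarrow> nat) \<Rightarrow> (nat \<Rightarrow>\<^sub>0 nat)" where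
  "wt a T = (\<Sum>B\<in>diag a. Poly_Mapping.single (T B) 1)"

end

theory Submission
  imports Defs
begin

text \<open>A weak composition b is a fixed slide of a iff it has the length and size of a and,
  whenever a_q \<noteq> 0, b_q > 0 and b_1 + ... + b_q = a_1 + ... + a_q: local moves preserve these
  conditions, and any other such b arises by a move from a composition closer to a, obtained by
  pushing a positive b_p with a_p = 0 into position p + 1.

  Read the boxes of D(a) row by row from the bottom, each row from right to left. An LSSF filling
  is weakly increasing in this order, hence determined by its weight; for a nonempty row s its
  entries at most s are exactly the boxes of rows 1..s, so its weight satisfies the conditions above.
  Conversely, writing b_1 ones, b_2 twos, ... into the boxes in reading order yields an LSSF filling
  of weight b. So T \<mapsto> wt(T) is a bijection from LSSF(a) onto the fixed slides of a.\<close>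

definition psum :: "nat list \<Rightarrow> nat \<Rightarrow> nat" where
  "psum b q = (\<Sum>x<q. b ! x)"

lemma psum_0 [simp]: "psum b 0 = 0"
  by (simp add: psum_def)

lemma psum_Suc: "psum b (Suc q) = psum b q + b ! q"
  by (simp add: psum_def)

lemma psum_mono: "i \<le> j \<Longrightarrow> psum b i \<le> psum b j"
  unfolding psum_def by (rule sum_mono2) auto

lemma list_eq_psumI:
  assumes "length b = length c" "\<And>q. q \<le> length c \<Longrightarrow> psum b q = psum c q"
  shows "b = c"
proof (rule nth_equalityI)
  show "b ! q = c ! q" if "q < length b" for q
    using assms that psum_Suc[of b q] psum_Suc[of c q] by simp
qed (use assms in simp)

lemma psum_update_pair:
  assumes "Suc p < length b" "i + j = b ! p + b ! Suc p" "q \<noteq> Suc p"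
  shows "psum (b[p := i, Suc p := j]) q = psum b q"
proof (cases "q \<le> p")
  case True
  then show ?thesis
    unfolding psum_def by (intro sum.cong) auto
next
  case False
  with assms(3) have q: "Suc (Suc p) \<le> q" by simp
  have below: "psum (b[p := i, Suc p := j]) p = psum b p"
    unfolding psum_def by (intro sum.cong) auto
  from q show ?thesis
  proof (induction q rule: nat_induct_at_least)
    case base
    show ?case
      using below assms(1,2) by (simp add: psum_Suc)
  next
    case (Suc q)
    then show ?case by (simp add: psum_Suc)
  qed
qed

definition slide_compatible :: "nat list \<Rightarrow> nat list \<Rightarrow> bool" where
  "slide_compatible a b \<longleftrightarrow> length b = length a \<and> psum b (length a) = psum a (length a) \<and>
     (\<forall>q<length a. a ! q \<noteq> 0 \<longrightarrow> 0 < b ! q \<and> psum b (Suc q) = psum a (Suc q))"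

lemma slide_compatible_refl: "slide_compatible a a"
  by (simp add: slide_compatible_def)

lemma slide_compatible_update:
  assumes b: "slide_compatible a b" and p: "Suc p < length a" "a ! p = 0"
    and ij: "i + j = b ! p + b ! Suc p" "a ! Suc p \<noteq> 0 \<longrightarrow> 0 < j"
  shows "slide_compatible a (b[p := i, Suc p := j])"
proof -
  have len: "length b = length a" using b by (simp add: slide_compatible_def)
  have psum_eq: "psum (b[p := i, Suc p := j]) q = psum b q" if "q \<noteq> Suc p" for q
    using psum_update_pair[OF _ ij(1) that] p len by simp
  show ?thesis
    unfolding slide_compatible_def
  proof (intro conjI allI impI)
    show "length (b[p := i, Suc p := j]) = length a" using len by simp
    show "psum (b[p := i, Suc p := j]) (length a) = psum a (length a)"
      using psum_eq[of "length a"] p b by (simp add: slide_compatible_def)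
    fix q assume q: "q < length a" "a ! q \<noteq> 0"
    with p have "q \<noteq> p" by auto
    with q b ij(2) show "0 < b[p := i, Suc p := j] ! q"
      by (cases "q = Suc p") (auto simp: slide_compatible_def len)
    show "psum (b[p := i, Suc p := j]) (Suc q) = psum a (Suc q)"
      using psum_eq[of "Suc q"] \<open>q \<noteq> p\<close> q b by (simp add: slide_compatible_def)
  qed
qed

lemma slide_step_compatible:
  assumes b: "slide_compatible a b" and st: "slide_step a b b'"
  shows "slide_compatible a b'"
proof -
  from st obtain p i j where p: "Suc p < length b" "b ! p = 0" "i + j = b ! Suc p"
    "a ! Suc p \<noteq> 0 \<longrightarrow> 0 < j" "b' = b[p := i, Suc p := j]"
    unfolding slide_step_def by blast
  have len: "length b = length a" using b by (simp add: slide_compatible_def)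
  have "a ! p = 0"
  proof (rule ccontr)
    assume "a ! p \<noteq> 0"
    then have "0 < b ! p" using b p(1) len by (simp add: slide_compatible_def)
    with p(2) show False by simp
  qed
  then show ?thesis
    using slide_compatible_update[OF b] p len by simp
qed

lemma fixed_slides_imp_slide_compatible:
  assumes "b \<in> fixed_slides a"
  shows "slide_compatible a b"
proof -
  from assms have "(slide_step a)\<^sup>*\<^sup>* a b" by (simp add: fixed_slides_def)
  then show ?thesis
    by (induction rule: rtranclp_induct) (auto intro: slide_compatible_refl slide_step_compatible)
qed

lemma slide_compatible_psum_ge:
  assumes "slide_compatible a b" "q \<le> length a"
  shows "psum a q \<le> psum b q"
  using assms(2)
proof (induction q)
  case (Suc q)
  then have "q < length a" by simp
  with Suc.IH show ?case
    using assms(1) by (cases "a ! q = 0") (auto simp: slide_compatible_def psum_Suc)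
qed simp

lemma slide_compatible_eqI:
  assumes b: "slide_compatible a b" and zero: "\<And>q. q < length a \<Longrightarrow> a ! q = 0 \<Longrightarrow> b ! q = 0"
  shows "b = a"
proof -
  have psum_eq: "psum b q = psum a q" if "q \<le> length a" for q
    using that
  proof (induction q)
    case (Suc q)
    then have "q < length a" by simp
    with Suc.IH show ?case
      using b zero[of q] by (cases "a ! q = 0") (auto simp: slide_compatible_def psum_Suc)
  qed simp
  show ?thesis
    using b psum_eq by (intro list_eq_psumI) (simp_all add: slide_compatible_def)
qed

lemma slide_compatible_unslide:
  assumes b: "slide_compatible a b" and "b \<noteq> a"
  obtains p where "Suc p < length a" "a ! p = 0" "0 < b ! p" "a ! Suc p \<noteq> 0 \<longrightarrow> 0 < b ! Suc p"
proof -
  obtain q where q: "q < length a" "a ! q = 0" "0 < b ! q"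
    using slide_compatible_eqI[OF b] \<open>b \<noteq> a\<close> by blast
  have "Suc q < length a"
  proof (rule ccontr)
    assume "\<not> Suc q < length a"
    with q have "length a = Suc q" by simp
    then have "psum b q + b ! q = psum a q"
      using b q(2) by (simp add: slide_compatible_def psum_Suc)
    with slide_compatible_psum_ge[OF b, of q] q show False by simp
  qed
  with q b that show ?thesis by (auto simp: slide_compatible_def)
qed

definition prefix_mass :: "nat list \<Rightarrow> nat" where
  "prefix_mass b = (\<Sum>q\<le>length b. psum b q)"

lemma slide_compatible_imp_fixed_slides: "slide_compatible a b \<Longrightarrow> b \<in> fixed_slides a"
proof (induction b rule: measure_induct_rule[where f = prefix_mass])
  case (less b)
  show ?case
  proof (cases "b = a")
    case True
    then show ?thesis by (simp add: fixed_slides_def)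
  next
    case False
    then obtain p where p: "Suc p < length a" "a ! p = 0" "0 < b ! p"
      "a ! Suc p \<noteq> 0 \<longrightarrow> 0 < b ! Suc p"
      using slide_compatible_unslide[OF less.prems] by blast
    have len: "length b = length a"
      using less.prems by (simp add: slide_compatible_def)
    define b' where "b' = b[p := 0, Suc p := b ! p + b ! Suc p]"
    have b': "slide_compatible a b'"
      unfolding b'_def using slide_compatible_update[OF less.prems p(1,2)] p(3) by simp
    have psum_eq: "psum b' q = psum b q" if "q \<noteq> Suc p" for q
      unfolding b'_def using psum_update_pair[of p b] that p(1) len by simp
    have less_at: "psum b' (Suc p) < psum b (Suc p)"
      using psum_eq[of p] p(1,3) len by (simp add: b'_def psum_Suc)
    have le: "psum b' q \<le> psum b q" for q
      using psum_eq[of q] less_at by (cases "q = Suc p") auto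
    have "length b' = length b" by (simp add: b'_def)
    then have "prefix_mass b' < prefix_mass b"
      unfolding prefix_mass_def \<open>length b' = length b\<close>
      by (intro sum_strict_mono_ex1) (use le less_at p(1) len in auto)
    then have "b' \<in> fixed_slides a"
      using less.IH b' by blast
    moreover have "slide_step a b' b"
      unfolding slide_step_def
    proof (intro exI conjI)
      show "Suc p < length b'" "b' ! p = 0" "b ! p + b ! Suc p = b' ! Suc p"
        using p(1) len by (simp_all add: b'_def)
      show "b = b'[p := b ! p, Suc p := b ! Suc p]"
        using p(1) len by (intro nth_equalityI) (auto simp: b'_def nth_list_update)
    qed (use p in auto)
    ultimately show ?thesis
      by (simp add: fixed_slides_def)
  qed
qed

lemma fixed_slides_eq: "fixed_slides a = {b. slide_compatible a b}"
  using fixed_slides_imp_slide_compatible slide_compatible_imp_fixed_slides by blast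

lemma mem_diag: "(r, c) \<in> diag a \<longleftrightarrow> 1 \<le> r \<and> r \<le> length a \<and> 1 \<le> c \<and> c \<le> a ! (r - 1)"
  by (simp add: diag_def)

lemma psum_row: "1 \<le> r \<Longrightarrow> psum a r = psum a (r - 1) + a ! (r - 1)"
  using psum_Suc[of a "r - 1"] by simp

lemma slide_compatible_row:
  assumes b: "slide_compatible a b" and B: "(r, c) \<in> diag a"
  shows "psum b r = psum a r" "0 < b ! (r - 1)"
proof -
  have r: "r - 1 < length a" "a ! (r - 1) \<noteq> 0" "Suc (r - 1) = r"
    using B by (auto simp: mem_diag)
  then have "0 < b ! (r - 1) \<and> psum b (Suc (r - 1)) = psum a (Suc (r - 1))"
    using b unfolding slide_compatible_def by blast
  with r(3) show "psum b r = psum a r" "0 < b ! (r - 1)" by simp_all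
qed

text \<open>Boxes are numbered 0, 1, ... bottom row first, each row from right to left.\<close>
definition reading_index :: "nat list \<Rightarrow> nat \<times> nat \<Rightarrow> nat" where
  "reading_index a B = psum a (fst B) - snd B"

lemma reading_index_bounds:
  assumes "(r, c) \<in> diag a"
  shows "psum a (r - 1) \<le> reading_index a (r, c)" "reading_index a (r, c) < psum a r"
  using assms psum_row[of r a] by (auto simp: mem_diag reading_index_def)

lemma reading_index_less_psum_iff:
  assumes "(r, c) \<in> diag a"
  shows "reading_index a (r, c) < psum a s \<longleftrightarrow> r \<le> s"
proof
  assume "reading_index a (r, c) < psum a s"
  moreover have "psum a (r - 1) \<le> reading_index a (r, c)"
    using reading_index_bounds(1)[OF assms] .
  ultimately have "psum a (r - 1) < psum a s" by simp
  then have "\<not> s \<le> r - 1" using psum_mono[of s "r - 1" a] by linarith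
  then show "r \<le> s" by simp
next
  assume "r \<le> s"
  then show "reading_index a (r, c) < psum a s"
    using reading_index_bounds(2)[OF assms] psum_mono[of r s a] by simp
qed

lemma reading_index_less_iff:
  assumes B: "(s, d) \<in> diag a" and B': "(r, c) \<in> diag a"
  shows "reading_index a (s, d) < reading_index a (r, c) \<longleftrightarrow> s < r \<or> (s = r \<and> c < d)"
proof (cases s r rule: linorder_cases)
  case less
  with B B' show ?thesis
    using reading_index_less_psum_iff[OF B, of "r - 1"] reading_index_bounds(1)[OF B'] by auto
next
  case greater
  with B B' show ?thesis
    using reading_index_less_psum_iff[OF B', of "s - 1"] reading_index_bounds(1)[OF B] by auto
next
  case equal
  have "c \<le> psum a r" "d \<le> psum a r"
    using B B' equal psum_row[of r a] by (auto simp: mem_diag)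
  with equal show ?thesis by (auto simp: reading_index_def)
qed

lemma inj_on_reading_index: "inj_on (reading_index a) (diag a)"
proof (rule inj_onI)
  fix B B' assume "B \<in> diag a" "B' \<in> diag a" "reading_index a B = reading_index a B'"
  then show "B = B'"
    using reading_index_less_iff[of "fst B" "snd B" a "fst B'" "snd B'"]
      reading_index_less_iff[of "fst B'" "snd B'" a "fst B" "snd B"]
    by (cases B, cases B') auto
qed

lemma reading_index_image: "reading_index a ` diag a = {..<psum a (length a)}"
proof (intro subset_antisym subsetI)
  fix x assume "x \<in> reading_index a ` diag a"
  then obtain r c where rc: "(r, c) \<in> diag a" "x = reading_index a (r, c)" by auto
  then show "x \<in> {..<psum a (length a)}"
    using reading_index_less_psum_iff[OF rc(1), of "length a"] by (simp add: mem_diag)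
next
  fix x assume "x \<in> {..<psum a (length a)}"
  then have x: "x < psum a (length a)" by simp
  define r where "r = (LEAST r. x < psum a r)"
  have r: "x < psum a r" "r \<le> length a"
    unfolding r_def using x by (rule LeastI, rule Least_le)
  then have "1 \<le> r" by (cases r) auto
  moreover have "\<not> x < psum a (r - 1)"
    using \<open>1 \<le> r\<close> unfolding r_def by (intro not_less_Least) simp
  ultimately have "(r, psum a r - x) \<in> diag a"
    using r psum_row[of r a] by (auto simp: mem_diag)
  moreover have "reading_index a (r, psum a r - x) = x"
    using r by (simp add: reading_index_def)
  ultimately show "x \<in> reading_index a ` diag a" by (metis image_eqI)
qed

lemma finite_diag: "finite (diag a)"
  using inj_on_reading_index reading_index_image finite_imageD by (metis finite_lessThan)

lemma card_reading_index_less: "card {B \<in> diag a. reading_index a B < k} = min k (psum a (length a))"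
proof -
  have "reading_index a ` {B \<in> diag a. reading_index a B < k} = {x \<in> reading_index a ` diag a. x < k}"
    by auto
  also have "\<dots> = {..<min k (psum a (length a))}"
    using reading_index_image[of a] by auto
  finally have "card (reading_index a ` {B \<in> diag a. reading_index a B < k}) = min k (psum a (length a))"
    by simp
  moreover have "inj_on (reading_index a) {B \<in> diag a. reading_index a B < k}"
    by (rule inj_on_subset[OF inj_on_reading_index]) auto
  ultimately show ?thesis by (simp add: card_image)
qed

lemma card_diag_rows_le:
  assumes "s \<le> length a"
  shows "card {B \<in> diag a. fst B \<le> s} = psum a s"
proof -
  have "{B \<in> diag a. fst B \<le> s} = {B \<in> diag a. reading_index a B < psum a s}"
    using reading_index_less_psum_iff by fastforce
  then show ?thesis
    using card_reading_index_less[of a "psum a s"] psum_mono[OF assms, of a] by simp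
qed

definition count_le :: "nat list \<Rightarrow> (nat \<times> nat \<Rightarrow> nat) \<Rightarrow> nat \<Rightarrow> nat" where
  "count_le a T v = card {B \<in> diag a. T B \<le> v}"

definition weight_list :: "nat list \<Rightarrow> (nat \<times> nat \<Rightarrow> nat) \<Rightarrow> nat list" where
  "weight_list a T = map (\<lambda>p. card {B \<in> diag a. T B = Suc p}) [0..<length a]"

lemma psum_weight_list:
  assumes pos: "\<forall>B\<in>diag a. 0 < T B" and "q \<le> length a"
  shows "psum (weight_list a T) q = count_le a T q"
  using assms(2)
proof (induction q)
  case 0
  have "{B \<in> diag a. T B \<le> 0} = {}" using pos by auto
  then show ?case by (metis card.empty count_le_def psum_0)
next
  case (Suc q)
  have "{B \<in> diag a. T B \<le> Suc q} = {B \<in> diag a. T B \<le> q} \<union> {B \<in> diag a. T B = Suc q}"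
    by auto
  then have "count_le a T (Suc q) = count_le a T q + card {B \<in> diag a. T B = Suc q}"
    unfolding count_le_def using finite_diag[of a] by (simp add: card_Un_disjoint disjoint_iff)
  with Suc show ?case by (simp add: psum_Suc weight_list_def)
qed

definition reading_monotone :: "nat list \<Rightarrow> (nat \<times> nat \<Rightarrow> nat) \<Rightarrow> bool" where
  "reading_monotone a T \<longleftrightarrow>
     (\<forall>B\<in>diag a. \<forall>B'\<in>diag a. reading_index a B < reading_index a B' \<longrightarrow> T B \<le> T B')"

lemma reading_monotone_le_iff:
  assumes T: "reading_monotone a T" and B: "B \<in> diag a"
  shows "T B \<le> v \<longleftrightarrow> reading_index a B < count_le a T v"
proof
  have idx: "reading_index a B < psum a (length a)"
    using B reading_index_image by blast
  assume "T B \<le> v"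
  have "T B' \<le> v" if B': "B' \<in> diag a" "reading_index a B' < Suc (reading_index a B)" for B'
  proof (cases "reading_index a B' = reading_index a B")
    case True
    then have "B' = B" using inj_onD[OF inj_on_reading_index _ B'(1) B] by simp
    with \<open>T B \<le> v\<close> show ?thesis by simp
  next
    case False
    then have "T B' \<le> T B" using T B B' by (simp add: reading_monotone_def)
    with \<open>T B \<le> v\<close> show ?thesis by simp
  qed
  then have "{B' \<in> diag a. reading_index a B' < Suc (reading_index a B)} \<subseteq> {B' \<in> diag a. T B' \<le> v}"
    by blast
  then have "card {B' \<in> diag a. reading_index a B' < Suc (reading_index a B)} \<le> count_le a T v"
    unfolding count_le_def by (intro card_mono) (simp_all add: finite_diag)
  with idx show "reading_index a B < count_le a T v"
    by (simp add: card_reading_index_less)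
next
  assume less: "reading_index a B < count_le a T v"
  show "T B \<le> v"
  proof (rule ccontr)
    assume "\<not> T B \<le> v"
    have "reading_index a B' < reading_index a B" if B': "B' \<in> diag a" "T B' \<le> v" for B'
    proof (rule ccontr)
      assume "\<not> reading_index a B' < reading_index a B"
      then have "B' = B \<or> reading_index a B < reading_index a B'"
        using inj_onD[OF inj_on_reading_index _ B'(1) B] by linarith
      then have "T B \<le> T B'" using T B B'(1) by (auto simp: reading_monotone_def)
      with B'(2) \<open>\<not> T B \<le> v\<close> show False by simp
    qed
    then have "{B' \<in> diag a. T B' \<le> v} \<subseteq> {B' \<in> diag a. reading_index a B' < reading_index a B}"
      by blast
    then have "count_le a T v \<le> card {B' \<in> diag a. reading_index a B' < reading_index a B}"
      unfolding count_le_def by (intro card_mono) (simp_all add: finite_diag)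
    with less show False by (simp add: card_reading_index_less)
  qed
qed

lemma LSSF_outside: "T \<in> LSSF a \<Longrightarrow> B \<notin> diag a \<Longrightarrow> T B = 0"
  unfolding LSSF_def by blast

lemma LSSF_pos: "T \<in> LSSF a \<Longrightarrow> B \<in> diag a \<Longrightarrow> 0 < T B"
  by (simp add: LSSF_def semi_skyline_def)

lemma LSSF_first_column: "T \<in> LSSF a \<Longrightarrow> (r, 1) \<in> diag a \<Longrightarrow> T (r, 1) = r"
  by (simp add: LSSF_def)

lemma LSSF_higher_row_less:
  "T \<in> LSSF a \<Longrightarrow> (r, c) \<in> diag a \<Longrightarrow> (s, d) \<in> diag a \<Longrightarrow> s < r \<Longrightarrow> T (s, d) < T (r, c)"
  by (simp add: LSSF_def)

lemma LSSF_row_antimono: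
  assumes T: "T \<in> LSSF a" and d: "(r, d) \<in> diag a" and "1 \<le> c" "c \<le> d"
  shows "T (r, d) \<le> T (r, c)"
  using \<open>c \<le> d\<close>
proof (induction d rule: dec_induct)
  case (step n)
  then have "(r, n) \<in> diag a" "(r, Suc n) \<in> diag a"
    using d \<open>1 \<le> c\<close> by (auto simp: mem_diag)
  then have "T (r, Suc n) \<le> T (r, n)"
    using T by (simp add: LSSF_def semi_skyline_def)
  with step.IH show ?case by simp
qed simp

lemma LSSF_le_row:
  assumes T: "T \<in> LSSF a" and B: "(r, c) \<in> diag a"
  shows "T (r, c) \<le> r"
  using LSSF_row_antimono[OF T B, of 1] LSSF_first_column[OF T, of r] B by (simp add: mem_diag)

lemma LSSF_le_length: "T \<in> LSSF a \<Longrightarrow> B \<in> diag a \<Longrightarrow> T B \<le> length a"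
  by (cases B) (fastforce simp: mem_diag dest: LSSF_le_row)

lemma LSSF_reading_monotone:
  assumes T: "T \<in> LSSF a"
  shows "reading_monotone a T"
  unfolding reading_monotone_def
proof (intro ballI impI)
  fix B B' assume B: "B \<in> diag a" and B': "B' \<in> diag a"
    and "reading_index a B < reading_index a B'"
  then have "fst B < fst B' \<or> (fst B = fst B' \<and> snd B' < snd B)"
    using reading_index_less_iff[of "fst B" "snd B" a "fst B'" "snd B'"] by simp
  then show "T B \<le> T B'"
    using LSSF_higher_row_less[OF T, of "fst B'" "snd B'" "fst B" "snd B"]
      LSSF_row_antimono[OF T, of "fst B" "snd B" "snd B'"] B B'
    by (cases B, cases B') (auto simp: mem_diag)
qed

lemma LSSF_le_iff_row_le:
  assumes T: "T \<in> LSSF a" and s: "(s, 1) \<in> diag a" and B: "B \<in> diag a"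
  shows "T B \<le> s \<longleftrightarrow> fst B \<le> s"
  using LSSF_higher_row_less[OF T, of "fst B" "snd B" s 1] LSSF_first_column[OF T s]
    LSSF_le_row[OF T, of "fst B" "snd B"] B s
  by (cases B) (auto simp: not_le[symmetric])

lemma weight_list_compatible:
  assumes T: "T \<in> LSSF a"
  shows "slide_compatible a (weight_list a T)"
proof -
  have pos: "\<forall>B\<in>diag a. 0 < T B" using LSSF_pos[OF T] by blast
  have "{B \<in> diag a. T B \<le> length a} = {B \<in> diag a. fst B \<le> length a}"
    using LSSF_le_length[OF T] by (auto simp: diag_def)
  then have total: "psum (weight_list a T) (length a) = psum a (length a)"
    using psum_weight_list[OF pos, of "length a"] card_diag_rows_le[of "length a" a]
    by (simp add: count_le_def)
  show ?thesis
    unfolding slide_compatible_def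
  proof (intro conjI allI impI total)
    show "length (weight_list a T) = length a" by (simp add: weight_list_def)
    fix q assume q: "q < length a" "a ! q \<noteq> 0"
    then have row: "(Suc q, 1) \<in> diag a" by (simp add: mem_diag)
    then have "(Suc q, 1) \<in> {B \<in> diag a. T B = Suc q}"
      using LSSF_first_column[OF T] by simp
    then show "0 < weight_list a T ! q"
      using q finite_diag[of a] by (auto simp: weight_list_def card_gt_0_iff)
    have "{B \<in> diag a. T B \<le> Suc q} = {B \<in> diag a. fst B \<le> Suc q}"
      using LSSF_le_iff_row_le[OF T row] by blast
    then show "psum (weight_list a T) (Suc q) = psum a (Suc q)"
      using psum_weight_list[OF pos, of "Suc q"] card_diag_rows_le[of "Suc q" a] q
      by (simp add: count_le_def)
  qed
qed

lemma semi_skylineI: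
  assumes pos: "\<And>B. B \<in> diag a \<Longrightarrow> 0 < T B"
    and row: "\<And>r c. (r, c) \<in> diag a \<Longrightarrow> (r, Suc c) \<in> diag a \<Longrightarrow> T (r, Suc c) \<le> T (r, c)"
    and higher: "\<And>r c s d. (r, c) \<in> diag a \<Longrightarrow> (s, d) \<in> diag a \<Longrightarrow> s < r \<Longrightarrow> T (s, d) < T (r, c)"
  shows "semi_skyline a T"
  unfolding semi_skyline_def inversion_triple_def
proof (intro conjI allI impI ballI pos)
  fix r s c assume "(r, c) \<in> diag a \<and> (s, c) \<in> diag a \<and> r \<noteq> s"
  then show "T (r, c) \<noteq> T (s, c)"
    using higher[of r c s c] higher[of s c r c] by (cases "r < s") auto
qed (use row higher in \<open>fastforce+\<close>)

definition filling_of :: "nat list \<Rightarrow> nat list \<Rightarrow> nat \<times> nat \<Rightarrow> nat" where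
  "filling_of a b B = (if B \<in> diag a then LEAST v. reading_index a B < psum b v else 0)"

lemma filling_of_le_iff:
  assumes b: "slide_compatible a b" and B: "B \<in> diag a"
  shows "filling_of a b B \<le> v \<longleftrightarrow> reading_index a B < psum b v"
proof -
  obtain r c where rc: "B = (r, c)" by (cases B)
  have "reading_index a B < psum b r"
    using reading_index_bounds(2) slide_compatible_row(1)[OF b] B rc by simp
  then have least: "reading_index a B < psum b (filling_of a b B)"
    using B unfolding filling_of_def by (auto intro: LeastI)
  show ?thesis
  proof
    assume "filling_of a b B \<le> v"
    with least show "reading_index a B < psum b v"
      using psum_mono[of "filling_of a b B" v b] by simp
  next
    assume "reading_index a B < psum b v"
    then show "filling_of a b B \<le> v"
      using B unfolding filling_of_def by (simp add: Least_le)
  qed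
qed

lemma filling_of_LSSF:
  assumes b: "slide_compatible a b"
  shows "filling_of a b \<in> LSSF a"
proof -
  note le_iff = filling_of_le_iff[OF b]
  have pos: "0 < filling_of a b B" if "B \<in> diag a" for B
    using le_iff[OF that, of 0] by simp
  have row: "filling_of a b (r, Suc c) \<le> filling_of a b (r, c)"
    if "(r, c) \<in> diag a" "(r, Suc c) \<in> diag a" for r c
    using le_iff[OF that(1), of "filling_of a b (r, c)"] le_iff[OF that(2)]
      reading_index_less_iff[OF that(2,1)] by simp
  have le_row: "filling_of a b (s, d) \<le> s" if "(s, d) \<in> diag a" for s d
    using le_iff[OF that] reading_index_bounds(2)[OF that] slide_compatible_row(1)[OF b that]
    by simp
  have higher: "filling_of a b (s, d) < filling_of a b (r, c)"
    if "(r, c) \<in> diag a" "(s, d) \<in> diag a" "s < r" for r c s d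
    using le_iff[OF that(1), of s] reading_index_less_psum_iff[OF that(1), of s]
      slide_compatible_row(1)[OF b that(2)] le_row[OF that(2)] that(3) by simp
  have first: "filling_of a b (r, 1) = r" if "(r, 1) \<in> diag a" for r
  proof -
    have "psum b (r - 1) + b ! (r - 1) = psum a r"
      using psum_row[of r b] slide_compatible_row(1)[OF b that] that by (simp add: mem_diag)
    then have "\<not> filling_of a b (r, 1) \<le> r - 1"
      using le_iff[OF that] slide_compatible_row(2)[OF b that] by (simp add: reading_index_def)
    with le_row[OF that] show ?thesis by simp
  qed
  have "semi_skyline a (filling_of a b)"
    by (rule semi_skylineI) (fact pos row higher)+
  moreover have "filling_of a b B = 0" if "B \<notin> diag a" for B
    using that by (simp add: filling_of_def)
  ultimately show ?thesis
    unfolding LSSF_def using first higher by blast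
qed

lemma weight_list_filling_of:
  assumes b: "slide_compatible a b"
  shows "weight_list a (filling_of a b) = b"
proof (rule list_eq_psumI)
  show "length (weight_list a (filling_of a b)) = length b"
    using b by (simp add: weight_list_def slide_compatible_def)
  fix q assume "q \<le> length b"
  then have q: "q \<le> length a" using b by (simp add: slide_compatible_def)
  have "count_le a (filling_of a b) q = card {B \<in> diag a. reading_index a B < psum b q}"
    unfolding count_le_def using filling_of_le_iff[OF b] by (intro arg_cong[where f = card]) blast
  also have "\<dots> = psum b q"
    using card_reading_index_less[of a "psum b q"] psum_mono[OF q, of b] b
    by (simp add: slide_compatible_def)
  finally show "psum (weight_list a (filling_of a b)) q = psum b q"
    using psum_weight_list[OF _ q] LSSF_pos[OF filling_of_LSSF[OF b]] by simp
qed

lemma filling_of_weight_list: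
  assumes T: "T \<in> LSSF a"
  shows "filling_of a (weight_list a T) = T"
proof
  fix B
  show "filling_of a (weight_list a T) B = T B"
  proof (cases "B \<in> diag a")
    case True
    have "filling_of a (weight_list a T) B \<le> v \<longleftrightarrow> T B \<le> v" if "v \<le> length a" for v
      using filling_of_le_iff[OF weight_list_compatible[OF T] True]
        psum_weight_list[OF _ that] LSSF_pos[OF T]
        reading_monotone_le_iff[OF LSSF_reading_monotone[OF T] True] by simp
    moreover have "filling_of a (weight_list a T) B \<le> length a"
      using LSSF_le_length[OF filling_of_LSSF[OF weight_list_compatible[OF T]] True] .
    ultimately show ?thesis
      using LSSF_le_length[OF T True] by (metis le_antisym order_refl)
  next
    case False
    then show ?thesis by (simp add: filling_of_def LSSF_outside[OF T])
  qed
qed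

lemma bij_betw_weight_list: "bij_betw (weight_list a) (LSSF a) (fixed_slides a)"
proof (rule bij_betw_byWitness[where f' = "filling_of a"])
  show "\<forall>T\<in>LSSF a. filling_of a (weight_list a T) = T"
    using filling_of_weight_list by blast
  show "\<forall>b\<in>fixed_slides a. weight_list a (filling_of a b) = b"
    using weight_list_filling_of by (auto simp: fixed_slides_eq)
  show "weight_list a ` LSSF a \<subseteq> fixed_slides a"
    using weight_list_compatible by (auto simp: fixed_slides_eq)
  show "filling_of a ` fixed_slides a \<subseteq> LSSF a"
    using filling_of_LSSF by (auto simp: fixed_slides_eq)
qed

lemma wt_eq_mono_weight_list:
  assumes "\<And>B. B \<in> diag a \<Longrightarrow> 0 < T B \<and> T B \<le> length a"
  shows "wt a T = Defs.mono (weight_list a T)"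
proof (rule poly_mapping_eqI)
  fix k
  have wt_k: "Poly_Mapping.lookup (wt a T) k = card {B \<in> diag a. T B = k}"
    by (simp add: wt_def lookup_sum lookup_single when_def sum.If_cases finite_diag Int_def)
  have mono_k: "Poly_Mapping.lookup (Defs.mono (weight_list a T)) k =
      (\<Sum>p<length a. if Suc p = k then card {B \<in> diag a. T B = k} else 0)"
    unfolding Defs.mono_def by (auto simp: lookup_sum lookup_single when_def weight_list_def intro: sum.cong)
  show "Poly_Mapping.lookup (wt a T) k = Poly_Mapping.lookup (Defs.mono (weight_list a T)) k"
  proof (cases "0 < k \<and> k \<le> length a")
    case True
    then have "{..<length a} \<inter> {p. Suc p = k} = {k - 1}" by auto
    with True show ?thesis
      unfolding wt_k mono_k by (simp add: sum.If_cases)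
  next
    case False
    then have no_box: "{B \<in> diag a. T B = k} = {}" using assms by fastforce
    show ?thesis
      unfolding wt_k mono_k no_box by simp
  qed
qed

theorem proposition4p11:
  fixes a :: "nat list"
  shows "frakL a = (\<Sum>T\<in>LSSF a. Poly_Mapping.single (wt a T) (1::int))"
proof -
  have "frakL a = (\<Sum>T\<in>LSSF a. Poly_Mapping.single (Defs.mono (weight_list a T)) 1)"
    unfolding frakL_def by (rule sum.reindex_bij_betw[OF bij_betw_weight_list, symmetric])
  also have "\<dots> = (\<Sum>T\<in>LSSF a. Poly_Mapping.single (wt a T) (1::int))"
    using LSSF_pos LSSF_le_length by (intro sum.cong refl) (simp add: wt_eq_mono_weight_list)
  finally show ?thesis .
qed

end
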